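(* Let $O$ be a Hermitian observable with $\|O\|\le1$, and let $\mathcal M$ be the GQPE measurement (with $\kappa=1$, any positive integer $m$ and $\gamma>0$). For any quantum state $\rho$, let $Z$ be the raw readout of applying $\mathcal M$ to $\rho$, and let $Z'$ be the raw readout of applying $\mathcal M$ again to the resulting post-measurement state. Then $|\mathrm{Cov}(Z,Z')|\le\mathbb V[Z]$.
   Context: GQPE measurement: $N=2^{2m}$, $h=2^{-m}$, $\omega_j=(j-N/2)h$ ($j=0,\dots,N-1$), $\xi_\ell=(\ell-N/2)h$, $\widehat g_\gamma(\xi)=(2\sqrt{2\pi}\gamma)^{1/2}e^{-4\pi^2\gamma^2\xi^2}$, $C=(h\sum_{\ell=1}^{N-1}\widehat g_\gamma(\xi_\ell)^2)^{1/2}$, $\tilde O=O/\kappa$, Kraus operators $O_j=\frac{h^{3/2}}{C}\sum_{\ell=1}^{N-1}e^{2\pi i\xi_\ell(\omega_jI-\tilde O)}\widehat g_\gamma(\xi_\ell)$. Applied to $\rho$, index $j$ occurs with probability $\operatorname{tr}(O_j\rho O_j^\dagger)$, post-state $O_j\rho O_j^\dagger/\operatorname{tr}(O_j\rho O_j^\dagger)$, and the raw readout is $Z=\omega_j$ if $|\omega_j|\le2$, else $Z=0$. $\mathrm{Cov}(Z,Z')=\mathbb E[ZZ']-\mathbb E[Z]\mathbb E[Z']$ over the joint distribution of the two successive measurements. *)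

theory Defs
  imports "HOL-Analysis.Analysis" "Jordan_Normal_Form.Matrix"
begin

definition ctrace :: "complex mat \<Rightarrow> complex" where
  "ctrace A = (\<Sum>i<dim_row A. A $$ (i, i))"

definition dagger :: "complex mat \<Rightarrow> complex mat" where
  "dagger A = mat (dim_col A) (dim_row A) (\<lambda>(i, j). cnj (A $$ (j, i)))"

definition hermitian_mat :: "nat \<Rightarrow> complex mat \<Rightarrow> bool" where
  "hermitian_mat n A \<longleftrightarrow> A \<in> carrier_mat n n \<and> dagger A = A"

definition vnorm :: "complex vec \<Rightarrow> real" where
  "vnorm v = sqrt (\<Sum>i<dim_vec v. (cmod (v $ i))\<^sup>2)"

definition opnorm_le :: "nat \<Rightarrow> complex mat \<Rightarrow> real \<Rightarrow> bool" where
  "opnorm_le n A c \<longleftrightarrow> (\<forall>v \<in> carrier_vec n. vnorm (A *\<^sub>v v) \<le> c * vnorm v)"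

definition density_mat :: "nat \<Rightarrow> complex mat \<Rightarrow> bool" where
  "density_mat n \<rho> \<longleftrightarrow> hermitian_mat n \<rho>
     \<and> (\<forall>v \<in> carrier_vec n. 0 \<le> Re (\<Sum>i<n. \<Sum>j<n. cnj (v $ i) * \<rho> $$ (i, j) * v $ j))
     \<and> ctrace \<rho> = 1"

definition mexp :: "complex mat \<Rightarrow> complex mat" where
  "mexp A = mat (dim_row A) (dim_col A)
     (\<lambda>(i, j). (\<Sum>k. (A ^\<^sub>m k) $$ (i, j) / of_nat (fact k)))"

definition gN :: "nat \<Rightarrow> nat" where "gN m = 2 ^ (2 * m)"
definition gh :: "nat \<Rightarrow> real" where "gh m = 1 / 2 ^ m"
definition omega :: "nat \<Rightarrow> nat \<Rightarrow> real" where
  "omega m j = (real j - real (gN m) / 2) * gh m"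
definition xi :: "nat \<Rightarrow> nat \<Rightarrow> real" where
  "xi m l = (real l - real (gN m) / 2) * gh m"
definition ghat :: "real \<Rightarrow> real \<Rightarrow> real" where
  "ghat \<gamma> x = sqrt (2 * sqrt (2 * pi) * \<gamma>) * exp (- 4 * pi\<^sup>2 * \<gamma>\<^sup>2 * x\<^sup>2)"
definition gC :: "nat \<Rightarrow> real \<Rightarrow> real" where
  "gC m \<gamma> = sqrt (gh m * (\<Sum>l\<in>{1..<gN m}. (ghat \<gamma> (xi m l))\<^sup>2))"

definition kraus :: "nat \<Rightarrow> complex mat \<Rightarrow> real \<Rightarrow> nat \<Rightarrow> real \<Rightarrow> nat \<Rightarrow> complex mat" where
  "kraus n Obs \<kappa> m \<gamma> j = mat n n (\<lambda>(a, b).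
     complex_of_real (gh m powr (3/2) / gC m \<gamma>) *
     (\<Sum>l\<in>{1..<gN m}.
        complex_of_real (ghat \<gamma> (xi m l)) *
        mexp ((2 * pi * \<i> * complex_of_real (xi m l)) \<cdot>\<^sub>m
              (complex_of_real (omega m j) \<cdot>\<^sub>m 1\<^sub>m n + (- complex_of_real (1 / \<kappa>)) \<cdot>\<^sub>m Obs)) $$ (a, b)))"

definition outcome_prob :: "complex mat \<Rightarrow> complex mat \<Rightarrow> real" where
  "outcome_prob K \<rho> = Re (ctrace (K * \<rho> * dagger K))"

definition post_state :: "complex mat \<Rightarrow> complex mat \<Rightarrow> complex mat" where
  "post_state K \<rho> = complex_of_real (1 / outcome_prob K \<rho>) \<cdot>\<^sub>m (K * \<rho> * dagger K)"

definition readout :: "nat \<Rightarrow> nat \<Rightarrow> real" where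
  "readout m j = (if \<bar>omega m j\<bar> \<le> 2 then omega m j else 0)"

definition p1 :: "nat \<Rightarrow> complex mat \<Rightarrow> real \<Rightarrow> nat \<Rightarrow> real \<Rightarrow> complex mat \<Rightarrow> nat \<Rightarrow> real" where
  "p1 n Obs \<kappa> m \<gamma> \<rho> j = outcome_prob (kraus n Obs \<kappa> m \<gamma> j) \<rho>"

definition p12 :: "nat \<Rightarrow> complex mat \<Rightarrow> real \<Rightarrow> nat \<Rightarrow> real \<Rightarrow> complex mat \<Rightarrow> nat \<Rightarrow> nat \<Rightarrow> real" where
  "p12 n Obs \<kappa> m \<gamma> \<rho> j k = p1 n Obs \<kappa> m \<gamma> \<rho> j *
     outcome_prob (kraus n Obs \<kappa> m \<gamma> k) (post_state (kraus n Obs \<kappa> m \<gamma> j) \<rho>)"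

definition EZ :: "nat \<Rightarrow> complex mat \<Rightarrow> real \<Rightarrow> nat \<Rightarrow> real \<Rightarrow> complex mat \<Rightarrow> real" where
  "EZ n Obs \<kappa> m \<gamma> \<rho> = (\<Sum>j<gN m. p1 n Obs \<kappa> m \<gamma> \<rho> j * readout m j)"

definition VZ :: "nat \<Rightarrow> complex mat \<Rightarrow> real \<Rightarrow> nat \<Rightarrow> real \<Rightarrow> complex mat \<Rightarrow> real" where
  "VZ n Obs \<kappa> m \<gamma> \<rho> = (\<Sum>j<gN m. p1 n Obs \<kappa> m \<gamma> \<rho> j * (readout m j)\<^sup>2) - (EZ n Obs \<kappa> m \<gamma> \<rho>)\<^sup>2"

definition EZ' :: "nat \<Rightarrow> complex mat \<Rightarrow> real \<Rightarrow> nat \<Rightarrow> real \<Rightarrow> complex mat \<Rightarrow> real" where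
  "EZ' n Obs \<kappa> m \<gamma> \<rho> = (\<Sum>j<gN m. \<Sum>k<gN m. p12 n Obs \<kappa> m \<gamma> \<rho> j k * readout m k)"

definition EZZ' :: "nat \<Rightarrow> complex mat \<Rightarrow> real \<Rightarrow> nat \<Rightarrow> real \<Rightarrow> complex mat \<Rightarrow> real" where
  "EZZ' n Obs \<kappa> m \<gamma> \<rho> = (\<Sum>j<gN m. \<Sum>k<gN m. p12 n Obs \<kappa> m \<gamma> \<rho> j k * readout m j * readout m k)"

definition CovZZ' :: "nat \<Rightarrow> complex mat \<Rightarrow> real \<Rightarrow> nat \<Rightarrow> real \<Rightarrow> complex mat \<Rightarrow> real" where
  "CovZZ' n Obs \<kappa> m \<gamma> \<rho> = EZZ' n Obs \<kappa> m \<gamma> \<rho> - EZ n Obs \<kappa> m \<gamma> \<rho> * EZ' n Obs \<kappa> m \<gamma> \<rho>"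

end

theory Submission
  imports Defs "HOL-Library.Real_Mod"
begin

text \<open>Every Kraus operator of the measurement is a finite linear combination of the matrices
  exp(beta O), and these commute with each other. Hence each effect P_j = K_j^* K_j commutes with
  all Kraus operators, and the joint law of two successive outcomes is q(j,k) = tr(rho P_j P_k).
  The weights q are nonnegative and symmetric, their marginals are the law of a single outcome
  (completeness, sum_j P_j = I, which comes from the discrete orthogonality of the Fourier phases),
  and they form a positive semidefinite quadratic form, since tr(rho Y^2) >= 0 for Hermitian Y.
  Positive semidefiniteness makes Cov(Z,Z') nonnegative, while sum q(j,k) (r_j - r_k)^2 >= 0 bounds
  E[Z Z'] by E[Z^2]; together 0 <= Cov(Z,Z') <= Var Z.\<close>

lemma index_mult_mat_sum:
  assumes "A \<in> carrier_mat n m" "B \<in> carrier_mat m k" "i < n" "j < k"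
  shows "(A * B) $$ (i,j) = (\<Sum>l<m. A $$ (i,l) * B $$ (l,j))"
  using assms by (auto simp: scalar_prod_def atLeast0LessThan intro!: sum.cong)

lemma smult_smult_mat: "a \<cdot>\<^sub>m (b \<cdot>\<^sub>m A) = (a * b :: 'a :: semigroup_mult) \<cdot>\<^sub>m A"
  by (rule eq_matI) (auto simp: mult.assoc)

lemma dagger_dim [simp]: "dim_row (dagger A) = dim_col A" "dim_col (dagger A) = dim_row A"
  by (auto simp: dagger_def)

lemma dagger_carrier [simp]: "A \<in> carrier_mat n m \<Longrightarrow> dagger A \<in> carrier_mat m n"
  by (auto simp: dagger_def)

lemma index_dagger [simp]: "i < dim_col A \<Longrightarrow> j < dim_row A \<Longrightarrow> dagger A $$ (i,j) = cnj (A $$ (j,i))"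
  by (auto simp: dagger_def)

lemma dagger_dagger [simp]: "dagger (dagger A) = A"
  by (rule eq_matI) auto

lemma dagger_mult:
  assumes "A \<in> carrier_mat n m" "B \<in> carrier_mat m k"
  shows "dagger (A * B) = dagger B * dagger A"
proof (rule eq_matI)
  fix i j assume "i < dim_row (dagger B * dagger A)" "j < dim_col (dagger B * dagger A)"
  then have i: "i < k" and j: "j < n" using assms by auto
  have "dagger (A * B) $$ (i,j) = (\<Sum>l<m. cnj (A $$ (j,l)) * cnj (B $$ (l,i)))"
    using assms i j by (simp add: index_mult_mat_sum[OF assms j i] cnj_sum)
  also have "\<dots> = (dagger B * dagger A) $$ (i,j)"
    using assms i j by (subst index_mult_mat_sum[of _ k m _ n]) (auto simp: mult.commute intro!: sum.cong)
  finally show "dagger (A * B) $$ (i,j) = (dagger B * dagger A) $$ (i,j)" .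
qed (use assms in auto)

lemma dagger_smult: "dagger (c \<cdot>\<^sub>m A) = cnj c \<cdot>\<^sub>m dagger A"
  by (rule eq_matI) auto

lemma dagger_one_mat [simp]: "dagger (1\<^sub>m n) = 1\<^sub>m n"
  by (rule eq_matI) auto

lemma pow_mat_Suc_left:
  assumes "A \<in> carrier_mat n n"
  shows "A ^\<^sub>m Suc k = A * A ^\<^sub>m k"
proof (induction k)
  case (Suc k)
  have "A ^\<^sub>m Suc (Suc k) = (A * A ^\<^sub>m k) * A" using Suc by simp
  also have "\<dots> = A * A ^\<^sub>m Suc k" using assms by (simp add: assoc_mult_mat[of _ n n _ n _ n])
  finally show ?case .
qed (use assms in simp)

lemma dagger_pow_mat:
  assumes "A \<in> carrier_mat n n"
  shows "dagger (A ^\<^sub>m k) = dagger A ^\<^sub>m k"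
proof (induction k)
  case (Suc k)
  have "dagger (A ^\<^sub>m Suc k) = dagger A * dagger (A ^\<^sub>m k)"
    using assms by (simp add: dagger_mult[of _ n n _ n])
  then show ?case
    using Suc pow_mat_Suc_left[of "dagger A" n k] assms by simp
qed (use assms in simp)

lemma pow_mat_smult:
  fixes c :: "'a :: comm_semiring_1"
  assumes "A \<in> carrier_mat n n"
  shows "(c \<cdot>\<^sub>m A) ^\<^sub>m k = c ^ k \<cdot>\<^sub>m A ^\<^sub>m k"
proof (induction k)
  case (Suc k)
  then show ?case
    using assms by (simp add: mult_smult_assoc_mat[of _ n n _ n] mult_smult_distrib[of _ n n _ n]
        smult_smult_mat mult.commute)
qed (use assms in auto)

lemma pow_one_mat: "(1\<^sub>m n :: 'a :: semiring_1 mat) ^\<^sub>m k = 1\<^sub>m n"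
  by (induction k) auto

lemma pow_mat_commute:
  assumes A: "A \<in> carrier_mat n n" and B: "B \<in> carrier_mat n n" and AB: "A * B = B * A"
  shows "A * B ^\<^sub>m k = B ^\<^sub>m k * A"
proof (induction k)
  case (Suc k)
  have "A * B ^\<^sub>m Suc k = (A * B ^\<^sub>m k) * B"
    using A B by (simp add: assoc_mult_mat[of _ n n _ n _ n])
  also have "\<dots> = B ^\<^sub>m k * (A * B)"
    using A B Suc by (simp add: assoc_mult_mat[of _ n n _ n _ n])
  also have "\<dots> = B ^\<^sub>m Suc k * A"
    using A B AB by (simp add: assoc_mult_mat[of _ n n _ n _ n])
  finally show ?case .
qed (use A B in simp)

definition msum :: "nat \<Rightarrow> ('i \<Rightarrow> complex mat) \<Rightarrow> 'i set \<Rightarrow> complex mat" where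
  "msum n f I = mat n n (\<lambda>(a,b). \<Sum>i\<in>I. f i $$ (a,b))"

lemma msum_carrier [simp]: "msum n f I \<in> carrier_mat n n"
  by (simp add: msum_def)

lemma msum_dim [simp]: "dim_row (msum n f I) = n" "dim_col (msum n f I) = n"
  by (simp_all add: msum_def)

lemma index_msum [simp]: "a < n \<Longrightarrow> b < n \<Longrightarrow> msum n f I $$ (a,b) = (\<Sum>i\<in>I. f i $$ (a,b))"
  by (simp add: msum_def)

lemma mult_msum_left:
  assumes A: "A \<in> carrier_mat n n" and F: "\<And>i. i \<in> I \<Longrightarrow> f i \<in> carrier_mat n n"
  shows "A * msum n f I = msum n (\<lambda>i. A * f i) I"
proof (rule eq_matI)
  fix a b assume "a < dim_row (msum n (\<lambda>i. A * f i) I)" "b < dim_col (msum n (\<lambda>i. A * f i) I)"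
  then have a: "a < n" and b: "b < n" by auto
  have "(A * msum n f I) $$ (a,b) = (\<Sum>l<n. A $$ (a,l) * (\<Sum>i\<in>I. f i $$ (l,b)))"
    using A a b by (subst index_mult_mat_sum[of _ n n _ n]) auto
  also have "\<dots> = (\<Sum>i\<in>I. \<Sum>l<n. A $$ (a,l) * f i $$ (l,b))"
    by (simp add: sum_distrib_left) (rule sum.swap)
  also have "\<dots> = msum n (\<lambda>i. A * f i) I $$ (a,b)"
    using A F a b by (simp add: index_mult_mat_sum[of _ n n _ n] del: index_mult_mat)
  finally show "(A * msum n f I) $$ (a,b) = msum n (\<lambda>i. A * f i) I $$ (a,b)" .
qed (use A in auto)

lemma msum_mult_right:
  assumes A: "A \<in> carrier_mat n n" and F: "\<And>i. i \<in> I \<Longrightarrow> f i \<in> carrier_mat n n"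
  shows "msum n f I * A = msum n (\<lambda>i. f i * A) I"
proof (rule eq_matI)
  fix a b assume "a < dim_row (msum n (\<lambda>i. f i * A) I)" "b < dim_col (msum n (\<lambda>i. f i * A) I)"
  then have a: "a < n" and b: "b < n" by auto
  have "(msum n f I * A) $$ (a,b) = (\<Sum>l<n. (\<Sum>i\<in>I. f i $$ (a,l)) * A $$ (l,b))"
    using A a b by (subst index_mult_mat_sum[of _ n n _ n]) auto
  also have "\<dots> = (\<Sum>i\<in>I. \<Sum>l<n. f i $$ (a,l) * A $$ (l,b))"
    by (simp add: sum_distrib_right) (rule sum.swap)
  also have "\<dots> = msum n (\<lambda>i. f i * A) I $$ (a,b)"
    using A F a b by (simp add: index_mult_mat_sum[of _ n n _ n] del: index_mult_mat)
  finally show "(msum n f I * A) $$ (a,b) = msum n (\<lambda>i. f i * A) I $$ (a,b)" .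
qed (use A in auto)

lemma dagger_msum:
  assumes "\<And>i. i \<in> I \<Longrightarrow> f i \<in> carrier_mat n n"
  shows "dagger (msum n f I) = msum n (\<lambda>i. dagger (f i)) I"
proof (rule eq_matI)
  fix i j assume "i < dim_row (msum n (\<lambda>i. dagger (f i)) I)" "j < dim_col (msum n (\<lambda>i. dagger (f i)) I)"
  then have i: "i < n" and j: "j < n" by auto
  have "cnj (f x $$ (j,i)) = dagger (f x) $$ (i,j)" if "x \<in> I" for x
    using assms[OF that] i j by simp
  then show "dagger (msum n f I) $$ (i,j) = msum n (\<lambda>i. dagger (f i)) I $$ (i,j)"
    using i j by (simp add: cnj_sum)
qed auto

lemma binomial_sum_Suc:
  fixes t :: "nat \<Rightarrow> nat \<Rightarrow> 'a :: comm_semiring_1"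
  shows "(\<Sum>p\<le>Suc k. of_nat (Suc k choose p) * t p (Suc k - p))
       = (\<Sum>p\<le>k. of_nat (k choose p) * (t (Suc p) (k - p) + t p (Suc k - p)))"
proof -
  have "(\<Sum>p\<le>k. of_nat (k choose p) * t p (Suc k - p))
      = (\<Sum>p\<le>Suc k. of_nat (k choose p) * t p (Suc k - p))"
    by (simp add: binomial_eq_0)
  also have "\<dots> = t 0 (Suc k) + (\<Sum>p\<le>k. of_nat (k choose Suc p) * t (Suc p) (k - p))"
    by (subst sum.atMost_Suc_shift) simp
  finally have "(\<Sum>p\<le>k. of_nat (k choose p) * t p (Suc k - p))
      = t 0 (Suc k) + (\<Sum>p\<le>k. of_nat (k choose Suc p) * t (Suc p) (k - p))" .
  then show ?thesis
    by (subst sum.atMost_Suc_shift) (simp add: sum.distrib distrib_left distrib_right add_ac)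
qed

lemma msum_binomial_Suc:
  fixes F :: "nat \<Rightarrow> nat \<Rightarrow> complex mat"
  assumes F: "\<And>p q. F p q \<in> carrier_mat n n"
  shows "msum n (\<lambda>p. of_nat (k choose p) \<cdot>\<^sub>m (F (Suc p) (k - p) + F p (Suc (k - p)))) {..k}
       = msum n (\<lambda>p. of_nat (Suc k choose p) \<cdot>\<^sub>m F p (Suc k - p)) {..Suc k}"
proof (rule eq_matI)
  fix a b assume "a < dim_row (msum n (\<lambda>p. of_nat (Suc k choose p) \<cdot>\<^sub>m F p (Suc k - p)) {..Suc k})"
    and "b < dim_col (msum n (\<lambda>p. of_nat (Suc k choose p) \<cdot>\<^sub>m F p (Suc k - p)) {..Suc k})"
  then have a: "a < n" and b: "b < n" by auto
  have dim: "dim_row (F p q) = n" "dim_col (F p q) = n" for p q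
    using F by auto
  define t where "t p q = F p q $$ (a,b)" for p q
  have "msum n (\<lambda>p. of_nat (k choose p) \<cdot>\<^sub>m (F (Suc p) (k - p) + F p (Suc (k - p)))) {..k} $$ (a,b)
      = (\<Sum>p\<le>k. of_nat (k choose p) * (t (Suc p) (k - p) + t p (Suc k - p)))"
    using a b unfolding t_def by (auto simp: dim Suc_diff_le intro!: sum.cong)
  also have "\<dots> = (\<Sum>p\<le>Suc k. of_nat (Suc k choose p) * t p (Suc k - p))"
    by (rule binomial_sum_Suc[symmetric])
  also have "\<dots> = msum n (\<lambda>p. of_nat (Suc k choose p) \<cdot>\<^sub>m F p (Suc k - p)) {..Suc k} $$ (a,b)"
    using a b unfolding t_def by (simp add: dim)
  finally show "msum n (\<lambda>p. of_nat (k choose p) \<cdot>\<^sub>m (F (Suc p) (k - p) + F p (Suc (k - p)))) {..k} $$ (a,b)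
      = msum n (\<lambda>p. of_nat (Suc k choose p) \<cdot>\<^sub>m F p (Suc k - p)) {..Suc k} $$ (a,b)" .
qed auto

lemma binomial_commuting_mat:
  assumes A: "A \<in> carrier_mat n n" and B: "B \<in> carrier_mat n n" and AB: "A * B = B * A"
  shows "(A + B) ^\<^sub>m k = msum n (\<lambda>p. of_nat (k choose p) \<cdot>\<^sub>m (A ^\<^sub>m p * B ^\<^sub>m (k - p))) {..k}"
proof (induction k)
  case 0
  then show ?case using A B by (intro eq_matI) auto
next
  case (Suc k)
  have step: "A ^\<^sub>m p * B ^\<^sub>m q * (A + B) = A ^\<^sub>m Suc p * B ^\<^sub>m q + A ^\<^sub>m p * B ^\<^sub>m Suc q" for p q
  proof -
    have "A ^\<^sub>m p * B ^\<^sub>m q * (A + B) = A ^\<^sub>m p * (B ^\<^sub>m q * A + B ^\<^sub>m q * B)"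
      using A B by (simp add: assoc_mult_mat[of _ n n _ n _ n] mult_add_distrib_mat[of "B ^\<^sub>m q" n n])
    also have "\<dots> = A ^\<^sub>m p * (B ^\<^sub>m q * A) + A ^\<^sub>m p * (B ^\<^sub>m q * B)"
      using A B by (intro mult_add_distrib_mat[of _ n n]) auto
    also have "\<dots> = A ^\<^sub>m Suc p * B ^\<^sub>m q + A ^\<^sub>m p * B ^\<^sub>m Suc q"
      using A B by (simp add: pow_mat_commute[OF A B AB, symmetric] assoc_mult_mat[of _ n n _ n _ n])
    finally show ?thesis .
  qed
  have "(A + B) ^\<^sub>m Suc k
      = msum n (\<lambda>p. of_nat (k choose p) \<cdot>\<^sub>m (A ^\<^sub>m p * B ^\<^sub>m (k - p)) * (A + B)) {..k}"
    using A B by (simp add: Suc.IH, subst msum_mult_right[of "A + B" n]) auto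
  also have "\<dots> = msum n (\<lambda>p. of_nat (k choose p) \<cdot>\<^sub>m
      (A ^\<^sub>m Suc p * B ^\<^sub>m (k - p) + A ^\<^sub>m p * B ^\<^sub>m Suc (k - p))) {..k}"
    using A B
    by (intro arg_cong[where f = "\<lambda>f. msum n f {..k}"] ext, subst mult_smult_assoc_mat[of _ n n _ n])
      (auto simp: step simp del: pow_mat.simps)
  also have "\<dots> = msum n (\<lambda>p. of_nat (Suc k choose p) \<cdot>\<^sub>m (A ^\<^sub>m p * B ^\<^sub>m (Suc k - p))) {..Suc k}"
    using A B by (intro msum_binomial_Suc) (auto intro!: mult_carrier_mat[of _ n n])
  finally show ?case .
qed

lemma pow_mat_entry_bound:
  fixes A :: "complex mat"
  assumes A: "A \<in> carrier_mat n n" and a: "a < n" and b: "b < n"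
  shows "cmod ((A ^\<^sub>m k) $$ (a,b)) \<le> (\<Sum>i<n. \<Sum>j<n. cmod (A $$ (i,j))) ^ k"
  using a b
proof (induction k arbitrary: a b)
  case (Suc k)
  define c where "c = (\<Sum>i<n. \<Sum>j<n. cmod (A $$ (i,j)))"
  have "cmod ((A ^\<^sub>m Suc k) $$ (a,b)) \<le> (\<Sum>l<n. cmod ((A ^\<^sub>m k) $$ (a,l)) * cmod (A $$ (l,b)))"
    using A Suc.prems
    by (simp add: index_mult_mat_sum[of _ n n _ n] norm_mult[symmetric] norm_sum del: index_mult_mat)
  also have "\<dots> \<le> (\<Sum>l<n. c ^ k * cmod (A $$ (l,b)))"
    using Suc.IH Suc.prems unfolding c_def by (intro sum_mono mult_right_mono) auto
  also have "\<dots> \<le> c ^ k * c"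
    unfolding sum_distrib_left[symmetric] c_def using Suc.prems
    by (intro mult_left_mono sum_mono member_le_sum zero_le_power sum_nonneg) auto
  finally show ?case unfolding c_def by (simp add: mult.commute)
qed (use A in auto)

lemma summable_mexp_entry:
  fixes A :: "complex mat"
  assumes "A \<in> carrier_mat n n" "a < n" "b < n"
  shows "summable (\<lambda>k. norm ((A ^\<^sub>m k) $$ (a,b) / of_nat (fact k)))"
proof (rule summable_comparison_test)
  show "summable (\<lambda>k. inverse (fact k) * (\<Sum>i<n. \<Sum>j<n. cmod (A $$ (i,j))) ^ k)"
    by (rule summable_exp)
qed (use pow_mat_entry_bound[OF assms] in \<open>auto simp: norm_divide divide_simps\<close>)

lemma index_mexp:
  "a < dim_row A \<Longrightarrow> b < dim_col A \<Longrightarrow> mexp A $$ (a,b) = (\<Sum>k. (A ^\<^sub>m k) $$ (a,b) / of_nat (fact k))"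
  by (simp add: mexp_def)

lemma mexp_carrier [simp]: "A \<in> carrier_mat n n \<Longrightarrow> mexp A \<in> carrier_mat n n"
  by (simp add: mexp_def)

lemma mexp_dim [simp]: "dim_row (mexp A) = dim_row A" "dim_col (mexp A) = dim_col A"
  by (auto simp: mexp_def)

lemma mexp_add:
  fixes X Y :: "complex mat"
  assumes X: "X \<in> carrier_mat n n" and Y: "Y \<in> carrier_mat n n" and XY: "X * Y = Y * X"
  shows "mexp X * mexp Y = mexp (X + Y)"
proof (rule eq_matI)
  fix a b assume "a < dim_row (mexp (X + Y))" "b < dim_col (mexp (X + Y))"
  then have a: "a < n" and b: "b < n" using X Y by auto
  define x where "x = (\<lambda>l k. (X ^\<^sub>m k) $$ (a,l) / of_nat (fact k))"
  define y where "y = (\<lambda>l k. (Y ^\<^sub>m k) $$ (l,b) / of_nat (fact k))"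
  have sx: "summable (\<lambda>k. norm (x l k))" if "l < n" for l
    unfolding x_def using summable_mexp_entry[OF X a that] .
  have sy: "summable (\<lambda>k. norm (y l k))" if "l < n" for l
    unfolding y_def using summable_mexp_entry[OF Y that b] .
  have "(mexp X * mexp Y) $$ (a,b) = (\<Sum>l<n. (\<Sum>k. x l k) * (\<Sum>k. y l k))"
    using X Y a b by (subst index_mult_mat_sum[of _ n n _ n]) (auto simp: index_mexp x_def y_def)
  also have "\<dots> = (\<Sum>l<n. \<Sum>k. \<Sum>p\<le>k. x l p * y l (k - p))"
    using sx sy by (intro sum.cong refl Cauchy_product) auto
  also have "\<dots> = (\<Sum>k. \<Sum>l<n. \<Sum>p\<le>k. x l p * y l (k - p))"
    using sx sy by (intro suminf_sum[symmetric] summable_Cauchy_product) auto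
  also have "\<dots> = (\<Sum>k. ((X + Y) ^\<^sub>m k) $$ (a,b) / of_nat (fact k))"
  proof (rule suminf_cong)
    fix k
    have "(\<Sum>l<n. \<Sum>p\<le>k. x l p * y l (k - p))
        = (\<Sum>p\<le>k. (X ^\<^sub>m p * Y ^\<^sub>m (k - p)) $$ (a,b) / (fact p * fact (k - p)))"
      unfolding x_def y_def using X Y a b
      by (subst sum.swap) (simp add: index_mult_mat_sum[of _ n n _ n] sum_divide_distrib del: index_mult_mat)
    also have "\<dots> = (\<Sum>p\<le>k. of_nat (k choose p) * (X ^\<^sub>m p * Y ^\<^sub>m (k - p)) $$ (a,b)) / fact k"
      by (simp add: sum_divide_distrib binomial_fact field_simps)
    also have "\<dots> = ((X + Y) ^\<^sub>m k) $$ (a,b) / of_nat (fact k)"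
      using X Y a b by (simp add: binomial_commuting_mat[OF X Y XY] del: pow_mat.simps)
    finally show "(\<Sum>l<n. \<Sum>p\<le>k. x l p * y l (k - p)) = ((X + Y) ^\<^sub>m k) $$ (a,b) / of_nat (fact k)" .
  qed
  also have "\<dots> = mexp (X + Y) $$ (a,b)"
    using X Y a b by (simp add: index_mexp)
  finally show "(mexp X * mexp Y) $$ (a,b) = mexp (X + Y) $$ (a,b)" .
qed (use X Y in auto)

lemma mexp_smult_one_mat: "mexp (\<alpha> \<cdot>\<^sub>m 1\<^sub>m n) = exp \<alpha> \<cdot>\<^sub>m 1\<^sub>m n"
proof (rule eq_matI)
  fix a b assume "a < dim_row (exp \<alpha> \<cdot>\<^sub>m 1\<^sub>m n)" "b < dim_col (exp \<alpha> \<cdot>\<^sub>m 1\<^sub>m n)"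
  then have a: "a < n" and b: "b < n" by auto
  have "(\<lambda>k. \<alpha> ^ k / of_nat (fact k)) sums exp \<alpha>"
    using exp_converges[of \<alpha>] by (simp add: scaleR_conv_of_real divide_inverse mult.commute)
  then show "mexp (\<alpha> \<cdot>\<^sub>m 1\<^sub>m n) $$ (a,b) = (exp \<alpha> \<cdot>\<^sub>m 1\<^sub>m n) $$ (a,b)"
    using a b by (auto simp: index_mexp pow_mat_smult[of "1\<^sub>m n" n] pow_one_mat sums_iff)
qed auto

lemma mexp_shift:
  fixes B :: "complex mat"
  assumes B: "B \<in> carrier_mat n n"
  shows "mexp (\<alpha> \<cdot>\<^sub>m 1\<^sub>m n + B) = exp \<alpha> \<cdot>\<^sub>m mexp B"
proof -
  have "mexp (\<alpha> \<cdot>\<^sub>m 1\<^sub>m n + B) = mexp (\<alpha> \<cdot>\<^sub>m 1\<^sub>m n) * mexp B"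
    using B by (intro mexp_add[symmetric, of _ n])
      (auto simp: mult_smult_assoc_mat[of _ n n _ n] mult_smult_distrib[of _ n n _ n])
  then show ?thesis
    using B by (simp add: mexp_smult_one_mat mult_smult_assoc_mat[of _ n n _ n])
qed

lemma dagger_mexp:
  fixes M :: "complex mat"
  assumes M: "M \<in> carrier_mat n n"
  shows "dagger (mexp M) = mexp (dagger M)"
proof (rule eq_matI)
  fix i j assume "i < dim_row (mexp (dagger M))" "j < dim_col (mexp (dagger M))"
  then have i: "i < n" and j: "j < n" using M by auto
  have "summable (\<lambda>k. (M ^\<^sub>m k) $$ (j,i) / of_nat (fact k))"
    using summable_mexp_entry[OF M j i] by (rule summable_norm_cancel)
  then have "(\<lambda>k. cnj ((M ^\<^sub>m k) $$ (j,i) / of_nat (fact k))) sums cnj (mexp M $$ (j,i))"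
    unfolding sums_cnj using M i j by (simp add: index_mexp summable_sums)
  then have "cnj (mexp M $$ (j,i)) = (\<Sum>k. cnj ((M ^\<^sub>m k) $$ (j,i) / of_nat (fact k)))"
    by (rule sums_unique)
  also have "\<dots> = mexp (dagger M) $$ (i,j)"
    using M i j by (simp add: index_mexp dagger_pow_mat[OF M, symmetric])
  finally show "dagger (mexp M) $$ (i,j) = mexp (dagger M) $$ (i,j)"
    using M i j by simp
qed (use M in auto)

lemma mexp_smult_add:
  fixes A :: "complex mat"
  assumes A: "A \<in> carrier_mat n n"
  shows "mexp (\<beta> \<cdot>\<^sub>m A) * mexp (\<gamma> \<cdot>\<^sub>m A) = mexp ((\<beta> + \<gamma>) \<cdot>\<^sub>m A)"
proof -
  have "(\<beta> \<cdot>\<^sub>m A) * (\<gamma> \<cdot>\<^sub>m A) = (\<gamma> \<cdot>\<^sub>m A) * (\<beta> \<cdot>\<^sub>m A)"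
    using A by (simp add: mult_smult_assoc_mat[of _ n n _ n] mult_smult_distrib[of _ n n _ n]
        smult_smult_mat mult.commute)
  moreover have "\<beta> \<cdot>\<^sub>m A + \<gamma> \<cdot>\<^sub>m A = (\<beta> + \<gamma>) \<cdot>\<^sub>m A"
    using A by (intro eq_matI) (auto simp: distrib_right)
  ultimately show ?thesis
    using A by (simp add: mexp_add[of _ n])
qed

lemma mexp_smult_zero:
  fixes A :: "complex mat"
  assumes "A \<in> carrier_mat n n"
  shows "mexp (0 \<cdot>\<^sub>m A) = 1\<^sub>m n"
proof -
  have "0 \<cdot>\<^sub>m A = 0 \<cdot>\<^sub>m 1\<^sub>m n"
    using assms by (intro eq_matI) auto
  then show ?thesis
    by (auto simp: mexp_smult_one_mat intro!: eq_matI)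
qed

definition exp_comb ::
    "nat \<Rightarrow> complex mat \<Rightarrow> ('i \<Rightarrow> complex) \<Rightarrow> ('i \<Rightarrow> complex) \<Rightarrow> 'i set \<Rightarrow> complex mat" where
  "exp_comb n A x \<beta> T = msum n (\<lambda>t. x t \<cdot>\<^sub>m mexp (\<beta> t \<cdot>\<^sub>m A)) T"

lemma exp_comb_carrier [simp]: "exp_comb n A x \<beta> T \<in> carrier_mat n n"
  by (simp add: exp_comb_def)

lemma exp_comb_dim [simp]: "dim_row (exp_comb n A x \<beta> T) = n" "dim_col (exp_comb n A x \<beta> T) = n"
  by (simp_all add: exp_comb_def)

lemma index_exp_comb:
  assumes "A \<in> carrier_mat n n" "a < n" "b < n"
  shows "exp_comb n A x \<beta> T $$ (a,b) = (\<Sum>t\<in>T. x t * mexp (\<beta> t \<cdot>\<^sub>m A) $$ (a,b))"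
  using assms by (simp add: exp_comb_def)

lemma index_mult_exp_comb:
  assumes A: "A \<in> carrier_mat n n" and a: "a < n" and b: "b < n"
  shows "(exp_comb n A x \<beta> T * exp_comb n A y \<gamma> S) $$ (a,b)
       = (\<Sum>t\<in>T. \<Sum>s\<in>S. x t * y s * mexp ((\<beta> t + \<gamma> s) \<cdot>\<^sub>m A) $$ (a,b))"
proof -
  define E where "E c = mexp (c \<cdot>\<^sub>m A)" for c
  have E: "E c \<in> carrier_mat n n" for c
    using A by (simp add: E_def)
  have "(exp_comb n A x \<beta> T * exp_comb n A y \<gamma> S) $$ (a,b)
      = (\<Sum>l<n. (\<Sum>t\<in>T. x t * E (\<beta> t) $$ (a,l)) * (\<Sum>s\<in>S. y s * E (\<gamma> s) $$ (l,b)))"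
    using A a b unfolding E_def
    by (simp add: index_mult_mat_sum[of _ n n _ n] index_exp_comb del: index_mult_mat)
  also have "\<dots> = (\<Sum>l<n. \<Sum>t\<in>T. \<Sum>s\<in>S. x t * y s * (E (\<beta> t) $$ (a,l) * E (\<gamma> s) $$ (l,b)))"
    by (simp add: sum_product mult_ac)
  also have "\<dots> = (\<Sum>t\<in>T. \<Sum>s\<in>S. \<Sum>l<n. x t * y s * (E (\<beta> t) $$ (a,l) * E (\<gamma> s) $$ (l,b)))"
    by (subst sum.swap) (simp add: sum.swap[of _ "{..<n}"])
  also have "\<dots> = (\<Sum>t\<in>T. \<Sum>s\<in>S. x t * y s * (E (\<beta> t) * E (\<gamma> s)) $$ (a,b))"
    using E a b by (simp add: index_mult_mat_sum[of _ n n _ n] sum_distrib_left del: index_mult_mat)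
  finally show ?thesis
    using A by (simp add: E_def mexp_smult_add)
qed

lemma exp_comb_commute:
  assumes A: "A \<in> carrier_mat n n"
  shows "exp_comb n A x \<beta> T * exp_comb n A y \<gamma> S = exp_comb n A y \<gamma> S * exp_comb n A x \<beta> T"
proof (rule eq_matI)
  fix a b assume "a < dim_row (exp_comb n A y \<gamma> S * exp_comb n A x \<beta> T)"
    and "b < dim_col (exp_comb n A y \<gamma> S * exp_comb n A x \<beta> T)"
  then have a: "a < n" and b: "b < n" by auto
  show "(exp_comb n A x \<beta> T * exp_comb n A y \<gamma> S) $$ (a,b) = (exp_comb n A y \<gamma> S * exp_comb n A x \<beta> T) $$ (a,b)"
    unfolding index_mult_exp_comb[OF A a b] by (subst sum.swap) (simp add: mult_ac add_ac)
qed auto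

lemma dagger_exp_comb:
  assumes A: "A \<in> carrier_mat n n" and herm: "dagger A = A"
  shows "dagger (exp_comb n A x \<beta> T) = exp_comb n A (\<lambda>t. cnj (x t)) (\<lambda>t. cnj (\<beta> t)) T"
proof -
  have "dagger (mexp (\<beta> t \<cdot>\<^sub>m A)) = mexp (cnj (\<beta> t) \<cdot>\<^sub>m A)" for t
    using A by (simp add: dagger_mexp[of _ n] dagger_smult herm)
  then show ?thesis
    using A unfolding exp_comb_def by (simp add: dagger_msum[where n = n] dagger_smult)
qed

lemma msum_dagger_mult_exp_comb:
  fixes x :: "'j \<Rightarrow> 'i \<Rightarrow> complex"
  assumes A: "A \<in> carrier_mat n n" and herm: "dagger A = A" and T: "finite T"
    and orth: "\<And>t s. t \<in> T \<Longrightarrow> s \<in> T \<Longrightarrow>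
      (\<Sum>j\<in>J. cnj (x j t) * x j s) = (if t = s then w t else 0)"
    and imag: "\<And>t. t \<in> T \<Longrightarrow> cnj (\<beta> t) + \<beta> t = 0"
    and total: "(\<Sum>t\<in>T. w t) = 1"
  shows "msum n (\<lambda>j. dagger (exp_comb n A (x j) \<beta> T) * exp_comb n A (x j) \<beta> T) J = 1\<^sub>m n"
proof (rule eq_matI)
  fix a b assume "a < dim_row (1\<^sub>m n :: complex mat)" "b < dim_col (1\<^sub>m n :: complex mat)"
  then have a: "a < n" and b: "b < n" by auto
  define E where "E t s = mexp ((cnj (\<beta> t) + \<beta> s) \<cdot>\<^sub>m A) $$ (a,b)" for t s
  have "msum n (\<lambda>j. dagger (exp_comb n A (x j) \<beta> T) * exp_comb n A (x j) \<beta> T) J $$ (a,b)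
      = (\<Sum>j\<in>J. \<Sum>t\<in>T. \<Sum>s\<in>T. cnj (x j t) * x j s * E t s)"
    using a b unfolding E_def by (simp add: dagger_exp_comb[OF A herm] index_mult_exp_comb[OF A a b])
  also have "\<dots> = (\<Sum>t\<in>T. \<Sum>j\<in>J. \<Sum>s\<in>T. cnj (x j t) * x j s * E t s)"
    by (rule sum.swap)
  also have "\<dots> = (\<Sum>t\<in>T. \<Sum>s\<in>T. \<Sum>j\<in>J. cnj (x j t) * x j s * E t s)"
    by (intro sum.cong refl sum.swap)
  also have "\<dots> = (\<Sum>t\<in>T. \<Sum>s\<in>T. (\<Sum>j\<in>J. cnj (x j t) * x j s) * E t s)"
    by (simp add: sum_distrib_right)
  \<comment> \<open>only the diagonal t = s survives, and there the exponent cnj (\<beta> t) + \<beta> t vanishes\<close>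
  also have "\<dots> = (\<Sum>t\<in>T. \<Sum>s\<in>T. if t = s then w t * E t s else 0)"
    by (intro sum.cong refl) (simp add: orth)
  also have "\<dots> = (\<Sum>t\<in>T. w t * E t t)"
    using T by simp
  also have "\<dots> = (\<Sum>t\<in>T. w t) * 1\<^sub>m n $$ (a,b)"
    using A a b unfolding E_def by (simp add: imag mexp_smult_zero sum_distrib_right)
  finally show "msum n (\<lambda>j. dagger (exp_comb n A (x j) \<beta> T) * exp_comb n A (x j) \<beta> T) J $$ (a,b) = 1\<^sub>m n $$ (a,b)"
    by (simp add: total)
qed auto

lemma sum_cis_roots_of_unity:
  fixes N :: nat and d :: int
  assumes N: "0 < N" and d0: "d \<noteq> 0" and dN: "\<bar>d\<bar> < int N"
  shows "(\<Sum>j<N. cis (2 * pi * real j * real_of_int d / real N)) = 0"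
proof -
  define w where "w = cis (2 * pi * real_of_int d / real N)"
  have pw: "cis (2 * pi * real j * real_of_int d / real N) = w ^ j" for j
  proof -
    have "w ^ j = cis (real j * (2 * pi * real_of_int d / real N))" unfolding w_def by (rule Complex.DeMoivre)
    then show ?thesis by (simp add: field_simps)
  qed
  have wN: "w ^ N = 1"
  proof -
    have "w ^ N = cis (2 * pi * real_of_int d)" unfolding w_def Complex.DeMoivre using N by simp
    also have "\<dots> = 1" by (rule cis_multiple_2pi) simp
    finally show ?thesis .
  qed
  have w1: "w \<noteq> 1"
  proof
    assume "w = 1"
    then obtain k :: int where "2 * pi * real_of_int d / real N = real_of_int k * (2 * pi)"
      by (auto simp: w_def cis_eq_1_iff)
    then have "real_of_int d = real_of_int (k * int N)"
      using N by (simp add: field_simps)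
    then have "d = k * int N"
      by (simp only: of_int_eq_iff)
    then show False
      using d0 dN by (cases "k = 0") (auto simp: abs_mult mult_le_cancel_right1 not_less)
  qed
  have "(\<Sum>j<N. cis (2 * pi * real j * real_of_int d / real N)) = (\<Sum>j<N. w ^ j)"
    by (simp add: pw)
  also have "\<dots> = 0" using geometric_sum[OF w1, of N] wN by simp
  finally show ?thesis .
qed

lemma gh_square_mult_gN: "gh m ^ 2 * real (gN m) = 1"
proof -
  have "((2::real)^m) ^ 2 = (2^2)^m" by (simp only: power_mult[symmetric] mult.commute)
  then have "((2::real)^m) ^ 2 = 4^m" by simp
  then show ?thesis by (simp add: gh_def gN_def power_mult power_divide)
qed

lemma sum_cis_grid_orthogonal:
  assumes l: "l < gN m" and l': "l' < gN m"
  shows "(\<Sum>j<gN m. cis (2 * pi * (xi m l' - xi m l) * omega m j)) = (if l = l' then of_nat (gN m) else 0)"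
proof (cases "l = l'")
  case True then show ?thesis by simp
next
  case False
  define N where "N = gN m"
  define d where "d = int l' - int l"
  have N: "0 < N" unfolding N_def gN_def by simp
  have d0: "d \<noteq> 0" using False unfolding d_def by simp
  have dN: "\<bar>d\<bar> < int N" using l l' unfolding d_def N_def by auto
  \<comment> \<open>xi l' - xi l = d h and omega j = (j - N/2) h with h^2 = 1/N: up to a constant factor
    the phases are the powers of a nontrivial N-th root of unity\<close>
  have hN: "gh m ^ 2 = 1 / real N" using gh_square_mult_gN[of m] N unfolding N_def by (simp add: field_simps)
  have th: "2 * pi * (xi m l' - xi m l) * omega m j = 2 * pi * real j * real_of_int d / real N + (- pi * real_of_int d)" for j
  proof -
    have "2 * pi * (xi m l' - xi m l) * omega m j = 2 * pi * real_of_int d * (real j - real N / 2) * gh m ^ 2"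
      unfolding xi_def omega_def d_def N_def by (simp add: power2_eq_square algebra_simps)
    also have "\<dots> = 2 * pi * real j * real_of_int d / real N + (- pi * real_of_int d)"
      unfolding hN using N by (simp add: field_simps)
    finally show ?thesis .
  qed
  have "(\<Sum>j<gN m. cis (2 * pi * (xi m l' - xi m l) * omega m j))
      = (\<Sum>j<N. cis (2 * pi * real j * real_of_int d / real N)) * cis (- pi * real_of_int d)"
    unfolding th N_def by (simp add: cis_mult sum_distrib_right)
  also have "\<dots> = 0" using sum_cis_roots_of_unity[OF N d0 dN] by simp
  finally show ?thesis using False by simp
qed

definition kraus_coeff :: "nat \<Rightarrow> real \<Rightarrow> nat \<Rightarrow> nat \<Rightarrow> complex" where
  "kraus_coeff m \<gamma> j l =
     complex_of_real (gh m powr (3/2) / gC m \<gamma> * ghat \<gamma> (xi m l)) * cis (2 * pi * xi m l * omega m j)"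

lemma kraus_eq_exp_comb:
  assumes Obs: "Obs \<in> carrier_mat n n"
  shows "kraus n Obs \<kappa> m \<gamma> j = exp_comb n (complex_of_real (1 / \<kappa>) \<cdot>\<^sub>m Obs) (kraus_coeff m \<gamma> j)
           (\<lambda>l. - (2 * pi * \<i> * complex_of_real (xi m l))) {1..<gN m}"
    (is "_ = exp_comb n ?A _ ?\<beta> _")
proof (rule eq_matI)
  fix a b assume "a < dim_row (exp_comb n ?A (kraus_coeff m \<gamma> j) ?\<beta> {1..<gN m})"
    and "b < dim_col (exp_comb n ?A (kraus_coeff m \<gamma> j) ?\<beta> {1..<gN m})"
  then have a: "a < n" and b: "b < n" by auto
  have "(2 * pi * \<i> * complex_of_real (xi m l)) \<cdot>\<^sub>m
        (complex_of_real (omega m j) \<cdot>\<^sub>m 1\<^sub>m n + (- complex_of_real (1 / \<kappa>)) \<cdot>\<^sub>m Obs)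
      = (2 * pi * \<i> * complex_of_real (xi m l * omega m j)) \<cdot>\<^sub>m 1\<^sub>m n + ?\<beta> l \<cdot>\<^sub>m ?A" for l
    using Obs by (intro eq_matI) (auto simp: algebra_simps)
  then have "mexp ((2 * pi * \<i> * complex_of_real (xi m l)) \<cdot>\<^sub>m
        (complex_of_real (omega m j) \<cdot>\<^sub>m 1\<^sub>m n + (- complex_of_real (1 / \<kappa>)) \<cdot>\<^sub>m Obs)) $$ (a,b)
      = cis (2 * pi * xi m l * omega m j) * mexp (?\<beta> l \<cdot>\<^sub>m ?A) $$ (a,b)" for l
    using Obs a b by (simp add: mexp_shift[where n = n] cis_conv_exp mult_ac)
  then show "kraus n Obs \<kappa> m \<gamma> j $$ (a,b) = exp_comb n ?A (kraus_coeff m \<gamma> j) ?\<beta> {1..<gN m} $$ (a,b)"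
    using Obs a b
    by (simp add: kraus_def index_exp_comb kraus_coeff_def sum_distrib_left mult_ac)
qed (simp_all add: kraus_def)

lemma kraus_coeff_orthogonal:
  assumes l: "l < gN m" and l': "l' < gN m"
  shows "(\<Sum>j<gN m. cnj (kraus_coeff m \<gamma> j l) * kraus_coeff m \<gamma> j l') =
    (if l = l' then complex_of_real ((gh m powr (3/2) / gC m \<gamma> * ghat \<gamma> (xi m l))\<^sup>2 * real (gN m)) else 0)"
proof -
  define c where "c l = gh m powr (3/2) / gC m \<gamma> * ghat \<gamma> (xi m l)" for l
  have "cnj (kraus_coeff m \<gamma> j l) * kraus_coeff m \<gamma> j l'
      = complex_of_real (c l * c l') * cis (2 * pi * (xi m l' - xi m l) * omega m j)" for j
    unfolding kraus_coeff_def c_def by (simp add: cis_cnj cis_mult mult_ac algebra_simps)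
  then have "(\<Sum>j<gN m. cnj (kraus_coeff m \<gamma> j l) * kraus_coeff m \<gamma> j l')
      = complex_of_real (c l * c l') * (\<Sum>j<gN m. cis (2 * pi * (xi m l' - xi m l) * omega m j))"
    by (simp add: sum_distrib_left)
  then show ?thesis
    unfolding sum_cis_grid_orthogonal[OF l l'] c_def by (simp add: power2_eq_square)
qed

lemma ghat_pos: "\<gamma> > 0 \<Longrightarrow> ghat \<gamma> x > 0"
  unfolding ghat_def by (intro mult_pos_pos) auto

lemma kraus_weights_sum:
  assumes m: "m > 0" and \<gamma>: "\<gamma> > 0"
  shows "(\<Sum>l\<in>{1..<gN m}. (gh m powr (3/2) / gC m \<gamma> * ghat \<gamma> (xi m l))\<^sup>2 * real (gN m)) = 1"
proof -
  define h where "h = gh m"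
  define G where "G = (\<Sum>l\<in>{1..<gN m}. (ghat \<gamma> (xi m l))\<^sup>2)"
  have h: "h > 0" unfolding h_def gh_def by simp
  have "(2::nat) ^ 2 \<le> 2 ^ (2 * m)" using m by (intro power_increasing) auto
  then have "1 \<in> {1..<gN m}" unfolding gN_def by auto
  then have G: "G > 0"
    unfolding G_def using ghat_pos[OF \<gamma>, THEN less_imp_neq, THEN not_sym]
    by (intro sum_pos2[of _ 1]) auto
  have "(gC m \<gamma>)\<^sup>2 = h * G"
    unfolding gC_def h_def[symmetric] G_def[symmetric] using h G by simp
  moreover have "(h powr (3/2))\<^sup>2 = h ^ 3"
    using h by (simp add: power2_eq_square powr_add[symmetric])
  ultimately have "(\<Sum>l\<in>{1..<gN m}. (gh m powr (3/2) / gC m \<gamma> * ghat \<gamma> (xi m l))\<^sup>2 * real (gN m))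
      = h ^ 3 / (h * G) * G * real (gN m)"
    unfolding G_def h_def
    by (simp add: sum_distrib_left sum_distrib_right sum_divide_distrib power_mult_distrib power_divide mult_ac)
  also have "\<dots> = h ^ 2 * real (gN m)"
    using h G by (simp add: power2_eq_square power3_eq_cube)
  also have "\<dots> = 1"
    unfolding h_def by (rule gh_square_mult_gN)
  finally show ?thesis .
qed

lemma kraus_completeness:
  assumes Obs: "hermitian_mat n Obs" and m: "m > 0" and \<gamma>: "\<gamma> > 0"
  shows "msum n (\<lambda>j. dagger (kraus n Obs \<kappa> m \<gamma> j) * kraus n Obs \<kappa> m \<gamma> j) {..<gN m} = 1\<^sub>m n"
proof -
  let ?A = "complex_of_real (1 / \<kappa>) \<cdot>\<^sub>m Obs"
  have A: "?A \<in> carrier_mat n n" "dagger ?A = ?A"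
    using Obs by (auto simp: hermitian_mat_def dagger_smult)
  have "Obs \<in> carrier_mat n n"
    using Obs by (simp add: hermitian_mat_def)
  moreover have
    "(\<Sum>l\<in>{1..<gN m}. complex_of_real ((gh m powr (3/2) / gC m \<gamma> * ghat \<gamma> (xi m l))\<^sup>2 * real (gN m))) = 1"
    using kraus_weights_sum[OF m \<gamma>] by (metis of_real_1 of_real_sum)
  ultimately show ?thesis
    unfolding kraus_eq_exp_comb[OF \<open>Obs \<in> carrier_mat n n\<close>]
    by (intro msum_dagger_mult_exp_comb[OF A]) (auto simp: kraus_coeff_orthogonal)
qed

lemma kraus_effect_commute:
  assumes Obs: "hermitian_mat n Obs"
  shows "dagger (kraus n Obs \<kappa> m \<gamma> k) * kraus n Obs \<kappa> m \<gamma> k * kraus n Obs \<kappa> m \<gamma> j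
       = kraus n Obs \<kappa> m \<gamma> j * (dagger (kraus n Obs \<kappa> m \<gamma> k) * kraus n Obs \<kappa> m \<gamma> k)"
proof -
  let ?A = "complex_of_real (1 / \<kappa>) \<cdot>\<^sub>m Obs"
  let ?K = "kraus n Obs \<kappa> m \<gamma>"
  have A: "?A \<in> carrier_mat n n" "dagger ?A = ?A"
    using Obs by (auto simp: hermitian_mat_def dagger_smult)
  have K: "?K i \<in> carrier_mat n n" for i
    by (simp add: kraus_def)
  have Obs_carrier: "Obs \<in> carrier_mat n n"
    using Obs by (simp add: hermitian_mat_def)
  have KK: "?K a * ?K b = ?K b * ?K a" for a b
    unfolding kraus_eq_exp_comb[OF Obs_carrier] by (rule exp_comb_commute[OF A(1)])
  have DK: "dagger (?K a) * ?K b = ?K b * dagger (?K a)" for a b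
    unfolding kraus_eq_exp_comb[OF Obs_carrier] dagger_exp_comb[OF A] by (rule exp_comb_commute[OF A(1)])
  have "dagger (?K k) * ?K k * ?K j = dagger (?K k) * (?K j * ?K k)"
    using K by (simp add: assoc_mult_mat[of _ n n _ n _ n] KK)
  also have "\<dots> = (dagger (?K k) * ?K j) * ?K k"
    using K assoc_mult_mat[of "dagger (?K k)" n n "?K j" n "?K k" n] by simp
  also have "\<dots> = ?K j * (dagger (?K k) * ?K k)"
    using K by (simp add: DK assoc_mult_mat[of _ n n _ n _ n])
  finally show ?thesis .
qed

lemma ctrace_mult_sum:
  assumes "A \<in> carrier_mat n m" "B \<in> carrier_mat m n"
  shows "ctrace (A * B) = (\<Sum>i<n. \<Sum>l<m. A $$ (i,l) * B $$ (l,i))"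
  using assms unfolding ctrace_def
  by (auto simp del: index_mult_mat simp: index_mult_mat_sum index_mult_mat(2,3) intro!: sum.cong)

lemma ctrace_mult_commute:
  assumes "A \<in> carrier_mat n m" "B \<in> carrier_mat m n"
  shows "ctrace (A * B) = ctrace (B * A)"
  unfolding ctrace_mult_sum[OF assms] ctrace_mult_sum[OF assms(2,1)]
  by (subst sum.swap) (simp add: mult.commute)

lemma ctrace_smult: "A \<in> carrier_mat n n \<Longrightarrow> ctrace (c \<cdot>\<^sub>m A) = c * ctrace A"
  unfolding ctrace_def by (auto simp: sum_distrib_left)

lemma ctrace_mult_msum:
  assumes R: "R \<in> carrier_mat n n" and F: "\<And>i. i \<in> I \<Longrightarrow> f i \<in> carrier_mat n n"
  shows "ctrace (R * msum n f I) = (\<Sum>i\<in>I. ctrace (R * f i))"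
proof -
  have "ctrace (R * msum n f I) = (\<Sum>a<n. \<Sum>i\<in>I. \<Sum>b<n. R $$ (a,b) * f i $$ (b,a))"
    using R by (simp add: ctrace_mult_sum[of _ n n] sum_distrib_left) (intro sum.cong refl sum.swap)
  also have "\<dots> = (\<Sum>i\<in>I. ctrace (R * f i))"
    using R F by (subst sum.swap) (simp add: ctrace_mult_sum[of _ n n])
  finally show ?thesis .
qed

lemma ctrace_sandwich:
  assumes M: "M \<in> carrier_mat n n" and R: "R \<in> carrier_mat n n"
  shows "ctrace (M * R * dagger M) = ctrace (R * (dagger M * M))"
proof -
  have "ctrace (M * R * dagger M) = ctrace (dagger M * (M * R))"
    using M R by (intro ctrace_mult_commute[of _ n n]) auto
  also have "dagger M * (M * R) = (dagger M * M) * R"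
    using M R by (simp add: assoc_mult_mat[of _ n n _ n _ n])
  also have "ctrace \<dots> = ctrace (R * (dagger M * M))"
    using M R by (intro ctrace_mult_commute[of _ n n]) auto
  finally show ?thesis .
qed

lemma density_trace_nonneg:
  assumes R: "density_mat n R" and X: "X \<in> carrier_mat n n"
  shows "0 \<le> Re (ctrace (R * (dagger X * X)))"
proof -
  have Rc: "R \<in> carrier_mat n n"
    using R unfolding density_mat_def hermitian_mat_def by auto
  \<comment> \<open>the trace is the sum over the rows of X of the quadratic forms of R at the conjugated rows\<close>
  define v where "v i = vec n (\<lambda>a. cnj (X $$ (i,a)))" for i
  have "ctrace (R * (dagger X * X)) = (\<Sum>i<n. \<Sum>l<n. (X * R) $$ (i,l) * cnj (X $$ (i,l)))"
    using X Rc by (simp add: ctrace_sandwich[symmetric] ctrace_mult_sum[of _ n n])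
  also have "\<dots> = (\<Sum>i<n. \<Sum>b<n. \<Sum>l<n. cnj (v i $ b) * R $$ (b,l) * v i $ l)"
    using X Rc unfolding v_def
    by (simp add: index_mult_mat_sum[of _ n n _ n] sum_distrib_right del: index_mult_mat)
      (intro sum.cong refl sum.swap)
  finally have "Re (ctrace (R * (dagger X * X))) = (\<Sum>i<n. Re (\<Sum>b<n. \<Sum>l<n. cnj (v i $ b) * R $$ (b,l) * v i $ l))"
    by simp
  moreover have "v i \<in> carrier_vec n" for i
    unfolding v_def by simp
  ultimately show ?thesis
    using R unfolding density_mat_def by (simp add: sum_nonneg)
qed

lemma outcome_prob_eq_trace:
  assumes "K \<in> carrier_mat n n" "R \<in> carrier_mat n n"
  shows "outcome_prob K R = Re (ctrace (R * (dagger K * K)))"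
  unfolding outcome_prob_def using ctrace_sandwich[OF assms] by simp

lemma outcome_prob_post_state:
  assumes K: "K \<in> carrier_mat n n" and L: "L \<in> carrier_mat n n" and R: "R \<in> carrier_mat n n"
    and p: "outcome_prob K R \<noteq> 0"
  shows "outcome_prob K R * outcome_prob L (post_state K R) = outcome_prob (L * K) R"
proof -
  let ?p = "outcome_prob K R"
  have "L * post_state K R * dagger L = complex_of_real (1 / ?p) \<cdot>\<^sub>m ((L * K) * R * dagger (L * K))"
    unfolding post_state_def using K L R
    by (simp add: mult_smult_assoc_mat[of _ n n _ n] mult_smult_distrib[of _ n n _ n]
        dagger_mult[of _ n n _ n] assoc_mult_mat[of _ n n _ n _ n] mult_carrier_mat[of _ n n _ n])
  moreover have "(L * K) * R * dagger (L * K) \<in> carrier_mat n n"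
    using K L R by (auto intro!: mult_carrier_mat[of _ n n])
  ultimately have "outcome_prob L (post_state K R) = 1 / ?p * outcome_prob (L * K) R"
    by (simp add: outcome_prob_def ctrace_smult)
  then show ?thesis
    using p by simp
qed

lemma psd_weights_covariance_nonneg:
  fixes q :: "nat \<Rightarrow> nat \<Rightarrow> real" and r :: "nat \<Rightarrow> real"
  assumes psd: "\<And>x. 0 \<le> (\<Sum>j<N. \<Sum>k<N. x j * x k * q j k)"
    and total: "(\<Sum>j<N. \<Sum>k<N. q j k) = 1"
  shows "(\<Sum>j<N. \<Sum>k<N. q j k * r j) * (\<Sum>j<N. \<Sum>k<N. q j k * r k) \<le> (\<Sum>j<N. \<Sum>k<N. q j k * r j * r k)"
proof -
  define e where "e = (\<Sum>j<N. \<Sum>k<N. q j k * r j)"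
  have "(\<Sum>j<N. \<Sum>k<N. (r j - e) * (r k - e) * q j k)
      = (\<Sum>j<N. \<Sum>k<N. q j k * r j * r k - e * (q j k * r k) - e * (q j k * r j) + e * e * q j k)"
    by (intro sum.cong refl) (simp add: algebra_simps)
  also have "\<dots> = (\<Sum>j<N. \<Sum>k<N. q j k * r j * r k) - e * (\<Sum>j<N. \<Sum>k<N. q j k * r k)
      - e * (\<Sum>j<N. \<Sum>k<N. q j k * r j) + e * e * (\<Sum>j<N. \<Sum>k<N. q j k)"
    by (simp add: sum.distrib sum_subtractf sum_distrib_left)
  also have "\<dots> = (\<Sum>j<N. \<Sum>k<N. q j k * r j * r k) - e * (\<Sum>j<N. \<Sum>k<N. q j k * r k)"
    unfolding total e_def[symmetric] by simp
  finally show ?thesis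
    using psd[of "\<lambda>j. r j - e"] unfolding e_def by simp
qed

lemma symmetric_weights_cross_moment_le:
  fixes q :: "nat \<Rightarrow> nat \<Rightarrow> real" and r :: "nat \<Rightarrow> real"
  assumes nonneg: "\<And>j k. j < N \<Longrightarrow> k < N \<Longrightarrow> 0 \<le> q j k"
    and sym: "\<And>j k. j < N \<Longrightarrow> k < N \<Longrightarrow> q j k = q k j"
  shows "(\<Sum>j<N. \<Sum>k<N. q j k * r j * r k) \<le> (\<Sum>j<N. \<Sum>k<N. q j k * (r j)\<^sup>2)"
proof -
  have "(\<Sum>j<N. \<Sum>k<N. q j k * (r k)\<^sup>2) = (\<Sum>k<N. \<Sum>j<N. q k j * (r k)\<^sup>2)"
    using sym by (subst sum.swap) (intro sum.cong refl; simp)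
  moreover have "0 \<le> (\<Sum>j<N. \<Sum>k<N. q j k * (r j - r k)\<^sup>2)"
    using nonneg by (intro sum_nonneg) auto
  moreover have "(\<Sum>j<N. \<Sum>k<N. q j k * (r j - r k)\<^sup>2)
      = (\<Sum>j<N. \<Sum>k<N. q j k * (r j)\<^sup>2) + (\<Sum>j<N. \<Sum>k<N. q j k * (r k)\<^sup>2)
        - 2 * (\<Sum>j<N. \<Sum>k<N. q j k * r j * r k)"
    by (simp add: power2_diff algebra_simps sum.distrib sum_subtractf sum_distrib_left)
  ultimately show ?thesis
    by simp
qed

definition two_step_prob :: "(nat \<Rightarrow> complex mat) \<Rightarrow> complex mat \<Rightarrow> nat \<Rightarrow> nat \<Rightarrow> real" where
  "two_step_prob K \<rho> j k = outcome_prob (K j) \<rho> * outcome_prob (K k) (post_state (K j) \<rho>)"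

locale commuting_measurement =
  fixes n N :: nat and K :: "nat \<Rightarrow> complex mat" and \<rho> :: "complex mat"
  assumes density: "density_mat n \<rho>"
    and kraus_carrier [simp]: "\<And>j. K j \<in> carrier_mat n n"
    and completeness: "msum n (\<lambda>j. dagger (K j) * K j) {..<N} = 1\<^sub>m n"
    and effect_kraus_commute: "\<And>j k. dagger (K k) * K k * K j = K j * (dagger (K k) * K k)"
begin

lemmas square_mat_simps = assoc_mult_mat[of _ n n _ n _ n] mult_carrier_mat[of _ n n _ n]

definition effect :: "nat \<Rightarrow> complex mat" where
  "effect j = dagger (K j) * K j"

definition joint_weight :: "nat \<Rightarrow> nat \<Rightarrow> real" where
  "joint_weight j k = Re (ctrace (\<rho> * (effect j * effect k)))"

lemma state_carrier [simp]: "\<rho> \<in> carrier_mat n n"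
  using density by (simp add: density_mat_def hermitian_mat_def)

lemma effect_carrier [simp]: "effect j \<in> carrier_mat n n"
  by (simp add: effect_def mult_carrier_mat[of _ n n])

lemma dagger_effect: "dagger (effect j) = effect j"
  by (simp add: effect_def dagger_mult[of _ n n _ n])

lemma effect_mult_commute: "effect j * effect k = effect k * effect j"
proof -
  have "dagger (effect k * K j) = dagger (K j * effect k)"
    using effect_kraus_commute[of k j] by (simp add: effect_def)
  then have dK: "dagger (K j) * effect k = effect k * dagger (K j)"
    by (simp add: dagger_mult[of _ n n _ n] dagger_effect)
  have "effect j * effect k = dagger (K j) * (K j * effect k)"
    by (simp add: effect_def square_mat_simps)
  also have "\<dots> = (dagger (K j) * effect k) * K j"
    using effect_kraus_commute[of k j] by (simp add: effect_def square_mat_simps)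
  also have "\<dots> = effect k * effect j"
    unfolding dK by (simp add: effect_def square_mat_simps)
  finally show ?thesis .
qed

lemma joint_weight_eq_outcome_prob: "joint_weight j k = outcome_prob (K k * K j) \<rho>"
proof -
  have "dagger (K k * K j) * (K k * K j) = dagger (K j) * (effect k * K j)"
    by (simp add: effect_def dagger_mult[of _ n n _ n] square_mat_simps)
  also have "\<dots> = effect j * effect k"
    using effect_kraus_commute[of k j] by (simp add: effect_def square_mat_simps)
  finally have "dagger (K k * K j) * (K k * K j) = effect j * effect k" .
  then show ?thesis
    using outcome_prob_eq_trace[of "K k * K j" n \<rho>] by (simp add: joint_weight_def square_mat_simps)
qed

lemma joint_weight_nonneg: "0 \<le> joint_weight j k"
  unfolding joint_weight_eq_outcome_prob
  by (simp add: outcome_prob_eq_trace[of _ n] density_trace_nonneg[OF density] square_mat_simps)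

lemma joint_weight_sym: "joint_weight j k = joint_weight k j"
  by (simp add: joint_weight_def effect_mult_commute)

lemma outcome_prob_eq_effect: "outcome_prob (K j) \<rho> = Re (ctrace (\<rho> * effect j))"
  by (simp add: outcome_prob_eq_trace[of _ n] effect_def)

lemma sum_effect: "msum n effect {..<N} = 1\<^sub>m n"
  using completeness by (simp add: effect_def[abs_def])

lemma sum_joint_weight: "(\<Sum>k<N. joint_weight j k) = outcome_prob (K j) \<rho>"
proof -
  have "effect j = msum n (\<lambda>k. effect j * effect k) {..<N}"
    using mult_msum_left[of "effect j" n "{..<N}" effect]
    by (simp add: sum_effect right_mult_one_mat[OF effect_carrier])
  then have "ctrace (\<rho> * effect j) = (\<Sum>k<N. ctrace (\<rho> * (effect j * effect k)))"
    by (metis ctrace_mult_msum[of _ n] state_carrier effect_carrier mult_carrier_mat)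
  then show ?thesis
    by (simp add: joint_weight_def outcome_prob_eq_effect Re_sum)
qed

lemma sum_outcome_prob: "(\<Sum>j<N. outcome_prob (K j) \<rho>) = 1"
proof -
  have "(\<Sum>j<N. ctrace (\<rho> * effect j)) = ctrace \<rho>"
    by (simp add: ctrace_mult_msum[of _ n, symmetric] sum_effect right_mult_one_mat[OF state_carrier])
  then show ?thesis
    using density by (simp add: outcome_prob_eq_effect Re_sum[symmetric] density_mat_def)
qed

lemma joint_weight_psd: "0 \<le> (\<Sum>j<N. \<Sum>k<N. x j * x k * joint_weight j k)"
proof -
  define Y where "Y = msum n (\<lambda>j. complex_of_real (x j) \<cdot>\<^sub>m effect j) {..<N}"
  have Y: "Y \<in> carrier_mat n n" "dagger Y = Y"
    unfolding Y_def by (simp_all add: dagger_msum[where n = n] dagger_smult dagger_effect)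
  have "(complex_of_real (x j) \<cdot>\<^sub>m effect j) * Y
      = msum n (\<lambda>k. complex_of_real (x j * x k) \<cdot>\<^sub>m (effect j * effect k)) {..<N}" for j
    unfolding Y_def
    by (subst mult_msum_left[of _ n]) (simp_all add: mult_smult_assoc_mat[of _ n n _ n]
        mult_smult_distrib[of _ n n _ n] smult_smult_mat mult.commute)
  then have "Y * Y = msum n (\<lambda>j.
      msum n (\<lambda>k. complex_of_real (x j * x k) \<cdot>\<^sub>m (effect j * effect k)) {..<N}) {..<N}"
    using Y(1) by (subst (1) Y_def, subst msum_mult_right[of _ n]) simp_all
  then have "ctrace (\<rho> * (Y * Y))
      = (\<Sum>j<N. \<Sum>k<N. complex_of_real (x j * x k) * ctrace (\<rho> * (effect j * effect k)))"
    by (simp add: ctrace_mult_msum[of _ n] mult_smult_distrib[of _ n n _ n] ctrace_smult[of _ n]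
        square_mat_simps)
  then have "Re (ctrace (\<rho> * (dagger Y * Y))) = (\<Sum>j<N. \<Sum>k<N. x j * x k * joint_weight j k)"
    by (simp add: Y(2) joint_weight_def Re_sum)
  then show ?thesis
    using density_trace_nonneg[OF density Y(1)] by simp
qed

lemma two_step_prob_eq_joint_weight:
  assumes k: "k < N"
  shows "two_step_prob K \<rho> j k = joint_weight j k"
proof (cases "outcome_prob (K j) \<rho> = 0")
  case True
  \<comment> \<open>post_state then divides by zero, but the factor outcome_prob (K j) \<rho> kills it\<close>
  then have "(\<Sum>k<N. joint_weight j k) = 0"
    by (simp add: sum_joint_weight)
  then have "joint_weight j k = 0"
    using k joint_weight_nonneg by (simp add: sum_nonneg_eq_0_iff)
  then show ?thesis
    using True by (simp add: two_step_prob_def)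
next
  case False
  then show ?thesis
    by (simp add: two_step_prob_def outcome_prob_post_state[of _ n] joint_weight_eq_outcome_prob)
qed

theorem covariance_le_variance:
  fixes r :: "nat \<Rightarrow> real"
  shows "\<bar>(\<Sum>j<N. \<Sum>k<N. two_step_prob K \<rho> j k * r j * r k)
          - (\<Sum>j<N. outcome_prob (K j) \<rho> * r j) * (\<Sum>j<N. \<Sum>k<N. two_step_prob K \<rho> j k * r k)\<bar>
       \<le> (\<Sum>j<N. outcome_prob (K j) \<rho> * (r j)\<^sup>2) - (\<Sum>j<N. outcome_prob (K j) \<rho> * r j)\<^sup>2"
proof -
  have first_marginal: "(\<Sum>j<N. outcome_prob (K j) \<rho> * f j) = (\<Sum>j<N. \<Sum>k<N. joint_weight j k * f j)" for f
    by (simp add: sum_joint_weight[symmetric] sum_distrib_right)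
  have second_marginal: "(\<Sum>j<N. \<Sum>k<N. two_step_prob K \<rho> j k * f k) = (\<Sum>j<N. outcome_prob (K j) \<rho> * f j)" for f
    by (subst sum.swap) (simp add: first_marginal two_step_prob_eq_joint_weight joint_weight_sym)
  have joint_eq: "(\<Sum>j<N. \<Sum>k<N. two_step_prob K \<rho> j k * r j * r k) = (\<Sum>j<N. \<Sum>k<N. joint_weight j k * r j * r k)"
    by (simp add: two_step_prob_eq_joint_weight)
  have total: "(\<Sum>j<N. \<Sum>k<N. joint_weight j k) = 1"
    using first_marginal[of "\<lambda>_. 1"] by (simp add: sum_outcome_prob)
  have "(\<Sum>j<N. outcome_prob (K j) \<rho> * r j) * (\<Sum>j<N. outcome_prob (K j) \<rho> * r j)
      \<le> (\<Sum>j<N. \<Sum>k<N. joint_weight j k * r j * r k)"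
    using psd_weights_covariance_nonneg[where q = joint_weight and r = r, OF joint_weight_psd total]
      second_marginal[of r]
    by (simp add: first_marginal two_step_prob_eq_joint_weight)
  moreover have "(\<Sum>j<N. \<Sum>k<N. joint_weight j k * r j * r k) \<le> (\<Sum>j<N. outcome_prob (K j) \<rho> * (r j)\<^sup>2)"
    using symmetric_weights_cross_moment_le[where q = joint_weight and r = r] joint_weight_nonneg joint_weight_sym
    by (simp add: first_marginal)
  ultimately show ?thesis
    unfolding joint_eq second_marginal by (simp add: power2_eq_square)
qed

end

theorem propositionD5:
  fixes n m :: nat and Obs \<rho> :: "complex mat" and \<gamma> :: real
  assumes "hermitian_mat n Obs"
    and "opnorm_le n Obs 1"
    and "m > 0"
    and "\<gamma> > 0"
    and "density_mat n \<rho>"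
  shows "\<bar>CovZZ' n Obs 1 m \<gamma> \<rho>\<bar> \<le> VZ n Obs 1 m \<gamma> \<rho>"
proof -
  interpret commuting_measurement n "gN m" "kraus n Obs 1 m \<gamma>" \<rho>
  proof
    show "kraus n Obs 1 m \<gamma> j \<in> carrier_mat n n" for j
      by (simp add: kraus_def)
  qed (use assms kraus_completeness kraus_effect_commute in auto)
  have "p1 n Obs 1 m \<gamma> \<rho> = (\<lambda>j. outcome_prob (kraus n Obs 1 m \<gamma> j) \<rho>)"
    and "p12 n Obs 1 m \<gamma> \<rho> = two_step_prob (kraus n Obs 1 m \<gamma>) \<rho>"
    by (simp_all add: fun_eq_iff p1_def p12_def two_step_prob_def)
  then show ?thesis
    using covariance_le_variance[of "readout m"]
    by (simp add: CovZZ'_def EZZ'_def EZ_def EZ'_def VZ_def)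
qed

end
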